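(* Let $(\Omega,\mathcal F,\mu)$ be a measure space, $p\in(1,\infty)$ and $r=\min\{p,2\}$. There is a constant $C>0$ depending only on $(\Omega,\mathcal F,\mu)$ and $p$ such that the following holds. If $\mathscr A\subset L^p(\Omega,\mathcal F,\mu)$ is uniformly approximable, then for every $K\ge0$ the set $\mathscr A_K=\{f\in\overline{\mathrm{co}}(\mathscr A):\ \|f-g\|_p\le K\ \text{for all } g\in\mathscr A\}$ is uniformly approximable, and for every $\varepsilon>0$, $$N_{p,\varepsilon}(\mathscr A_K)\le\min_{\eta\in(0,1)}\big(N_{p,(1-\eta)\varepsilon}(\mathscr A)\big)^{s(\eta)},\qquad s(\eta)=\Big\lfloor\Big(\tfrac{CK}{\eta\varepsilon}\Big)^{\frac{r}{r-1}}\Big\rfloor+1.$$ In particular, if $\mathscr A$ is bounded and uniformly approximable, then its closed convex hull $\overline{\mathrm{co}}(\mathscr A)$ is uniformly approximable.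
   Context: All measures are assumed not identically zero. $\mathscr G_{p,k}$ is the set of functions $\sum_{i=1}^l a_i\mathbf 1_{A_i}\in L^p$ with $l\le k$, $\{A_i\}$ a measurable partition of $\Omega$, $a_i\in\mathbb R$. $N_{p,\varepsilon}(\mathscr A)=\inf\{k\ge1:\ \forall f\in\mathscr A\ \exists h\in\mathscr G_{p,k},\ \|f-h\|_p\le\varepsilon\}$ ($\inf\emptyset=\infty$); $\mathscr A$ is uniformly approximable if this is finite for all $\varepsilon>0$. $\overline{\mathrm{co}}$ denotes the norm-closed convex hull. *)

theory Defs
  imports "HOL-Analysis.Analysis" "HOL-Library.Extended_Nat"
begin

definition Lp :: "'a measure \<Rightarrow> real \<Rightarrow> ('a \<Rightarrow> real) set" where
  "Lp M p = {f. f \<in> borel_measurable M \<and> integrable M (\<lambda>x. \<bar>f x\<bar> powr p)}"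

definition Lpnorm :: "'a measure \<Rightarrow> real \<Rightarrow> ('a \<Rightarrow> real) \<Rightarrow> real" where
  "Lpnorm M p f = (\<integral>x. \<bar>f x\<bar> powr p \<partial>M) powr (1 / p)"

definition Gpk :: "'a measure \<Rightarrow> real \<Rightarrow> nat \<Rightarrow> ('a \<Rightarrow> real) set" where
  "Gpk M p k = {h. h \<in> Lp M p \<and>
     (\<exists>l::nat. \<exists>A :: nat \<Rightarrow> 'a set. \<exists>a :: nat \<Rightarrow> real.
        l \<le> k \<and> (\<forall>i<l. A i \<in> sets M) \<and>
        (\<forall>i<l. \<forall>j<l. i \<noteq> j \<longrightarrow> A i \<inter> A j = {}) \<and>
        (\<Union>i<l. A i) = space M \<and>
        h = (\<lambda>x. \<Sum>i<l. a i * indicator (A i) x))}"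

definition Ncov :: "'a measure \<Rightarrow> real \<Rightarrow> real \<Rightarrow> ('a \<Rightarrow> real) set \<Rightarrow> enat" where
  "Ncov M p \<epsilon> \<A> = (INF k \<in> {k::nat. k \<ge> 1 \<and>
      (\<forall>f\<in>\<A>. \<exists>h\<in>Gpk M p k. Lpnorm M p (\<lambda>x. f x - h x) \<le> \<epsilon>)}. enat k)"

definition unif_approx :: "'a measure \<Rightarrow> real \<Rightarrow> ('a \<Rightarrow> real) set \<Rightarrow> bool" where
  "unif_approx M p \<A> \<longleftrightarrow> (\<forall>\<epsilon>>0. Ncov M p \<epsilon> \<A> < \<infinity>)"

definition conv_comb :: "('a \<Rightarrow> real) set \<Rightarrow> ('a \<Rightarrow> real) set" where
  "conv_comb \<A> = {f. \<exists>n::nat. \<exists>c :: nat \<Rightarrow> real. \<exists>g :: nat \<Rightarrow> 'a \<Rightarrow> real.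
      (\<forall>i<n. c i \<ge> 0 \<and> g i \<in> \<A>) \<and> (\<Sum>i<n. c i) = 1 \<and>
      f = (\<lambda>x. \<Sum>i<n. c i * g i x)}"

definition closed_co :: "'a measure \<Rightarrow> real \<Rightarrow> ('a \<Rightarrow> real) set \<Rightarrow> ('a \<Rightarrow> real) set" where
  "closed_co M p \<A> = {f \<in> Lp M p. \<forall>\<delta>>0. \<exists>g\<in>conv_comb \<A>. Lpnorm M p (\<lambda>x. f x - g x) \<le> \<delta>}"

end

theory Submission
  imports Defs
begin

text \<open>Let \<open>f\<close> lie in the closed convex hull of \<open>\<A>\<close> within distance \<open>K\<close> of every \<open>g \<in> \<A>\<close>, and
  approximate it by a convex combination \<open>\<Sum>\<^sub>j c\<^sub>j g\<^sub>j\<close>. Drawing \<open>s\<close> of the \<open>g\<^sub>j\<close> independently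
  with probabilities \<open>c\<^sub>j\<close> (Maurey's empirical method), the expected \<open>p\<close>-th power of the distance
  between the empirical mean and the combination is \<open>O(K\<^sup>p s powr (p/r - p))\<close>, \<open>r = min p 2\<close>; this
  follows by iterating a pointwise smoothness inequality for \<open>\<bar>t\<bar> powr p\<close>, in which the
  first-order terms average out. Hence some empirical mean lies within \<open>C K s powr (1/r - 1)\<close>.
  Approximating each of the \<open>s\<close> sampled functions by a simple function on at most \<open>N\<close> pieces
  and passing to the common refinement gives a simple function on at most \<open>N\<^sup>s\<close> pieces; choosing
  \<open>s\<close> as in the theorem makes the total error at most \<open>\<epsilon>\<close>. If \<open>\<A>\<close> is bounded by \<open>B\<close>, the
  whole closed convex hull is within distance \<open>2B\<close> of \<open>\<A>\<close>.\<close>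

section \<open>A smoothness inequality for \<open>\<bar>t\<bar> powr p\<close>\<close>

lemma powr_Taylor_second_order:
  fixes p a b :: real
  assumes a: "a > 0" and b: "2 * \<bar>b\<bar> < a"
  shows "\<exists>\<xi>. a/2 < \<xi> \<and> \<xi> < 3*a/2 \<and>
     (a+b) powr p = a powr p + p * a powr (p-1) * b + p*(p-1)/2 * \<xi> powr (p-2) * b^2"
proof (cases "b = 0")
  case True
  then show ?thesis using a by (intro exI[of _ a]) auto
next
  case False
  define diff where "diff = (\<lambda>m::nat. \<lambda>t::real.
      if m = 0 then t powr p else if m = 1 then p * t powr (p-1) else p*(p-1) * t powr (p-2))"
  have D: "\<forall>(m::nat) t. m < 2 \<and> a/2 \<le> t \<and> t \<le> 3*a/2 \<longrightarrow> DERIV (diff m) t :> diff (Suc m) t"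
  proof (intro allI impI)
    fix m :: nat and t assume h: "m < 2 \<and> a/2 \<le> t \<and> t \<le> 3*a/2"
    then have t: "t > 0" using a by auto
    show "DERIV (diff m) t :> diff (Suc m) t"
    proof (cases "m = 0")
      case True
      then show ?thesis unfolding diff_def using has_real_derivative_powr[OF t, of p] by simp
    next
      case False
      then have "m = 1" using h by auto
      have "((\<lambda>t. p * t powr (p-1)) has_real_derivative p * ((p-1) * t powr (p-1-1))) (at t)"
        by (intro DERIV_cmult has_real_derivative_powr t)
      then show ?thesis unfolding diff_def using \<open>m = 1\<close> by (simp add: algebra_simps)
    qed
  qed
  have "\<exists>t. (if a+b < a then a+b < t \<and> t < a else a < t \<and> t < a+b) \<and>
    (a+b) powr p = (\<Sum>m<2. diff m a / fact m * ((a+b) - a)^m) + diff 2 t / fact 2 * ((a+b) - a)^2"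
    by (rule Taylor[OF _ _ D]) (use a b False in \<open>auto simp: diff_def\<close>)
  then obtain t where t: "if a+b < a then a+b < t \<and> t < a else a < t \<and> t < a+b"
    and eq: "(a+b) powr p = (\<Sum>m<2. diff m a / fact m * ((a+b) - a)^m) + diff 2 t / fact 2 * ((a+b) - a)^2"
    by blast
  have "a/2 < t \<and> t < 3*a/2" using t a b by (auto split: if_splits)
  moreover have "(a+b) powr p = a powr p + p * a powr (p-1) * b + p*(p-1)/2 * t powr (p-2) * b^2"
    using eq by (simp add: diff_def eval_nat_numeral)
  ultimately show ?thesis by blast
qed

text \<open>With \<open>r = min p 2\<close>, this first-order expansion of \<open>\<bar>a+b\<bar>\<^sup>p\<close> is what integrating over
  \<open>k\<close> random mean-zero increments (with \<open>\<kappa> \<approx> k\<close>) turns into the growth \<open>k powr (p/r)\<close>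
  of the \<open>p\<close>-th moment of their sum.\<close>
definition powr_smoothness :: "real \<Rightarrow> real \<Rightarrow> bool" where
  "powr_smoothness p E \<longleftrightarrow> (\<forall>\<kappa> a b. \<kappa> \<ge> 1 \<longrightarrow>
     \<bar>a+b\<bar> powr p \<le> (1 + 1/(2*\<kappa>)) * \<bar>a\<bar> powr p + p * sgn a * \<bar>a\<bar> powr (p-1) * b
                      + E * \<kappa> powr (p / min p 2 - 1) * \<bar>b\<bar> powr p)"

lemma powr_smoothness_large_increment:
  fixes p a b E \<kappa> q :: real
  assumes p: "1 < p" and ab: "\<bar>a\<bar> \<le> 2 * \<bar>b\<bar>" and k: "\<kappa> \<ge> 1" and q: "q \<ge> 1"
    and E: "E \<ge> 3 powr p + p * 2 powr (p-1)"
  shows "\<bar>a+b\<bar> powr p \<le> (1 + 1/(2*\<kappa>)) * \<bar>a\<bar> powr p + p * sgn a * \<bar>a\<bar> powr (p-1) * b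
                           + E * \<kappa> powr (q-1) * \<bar>b\<bar> powr p"
proof (cases "b = 0")
  case True
  then show ?thesis using ab by simp
next
  case False
  have "\<bar>a+b\<bar> powr p \<le> (3*\<bar>b\<bar>) powr p"
    by (rule powr_mono2) (use p ab in auto)
  then have sum_le: "\<bar>a+b\<bar> powr p \<le> 3 powr p * \<bar>b\<bar> powr p" by (simp add: powr_mult)
  have "\<bar>p * sgn a * \<bar>a\<bar> powr (p-1) * b\<bar> \<le> p * \<bar>a\<bar> powr (p-1) * \<bar>b\<bar>"
    using p by (auto simp: abs_mult abs_sgn_eq)
  also have "\<dots> \<le> p * (2*\<bar>b\<bar>) powr (p-1) * \<bar>b\<bar>"
    using p ab by (intro mult_right_mono mult_left_mono powr_mono2) auto
  also have "\<dots> = p * 2 powr (p-1) * \<bar>b\<bar> powr p"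
    using False by (simp add: powr_mult powr_diff)
  finally have linear_ge: "p * sgn a * \<bar>a\<bar> powr (p-1) * b \<ge> - (p * 2 powr (p-1) * \<bar>b\<bar> powr p)"
    by linarith
  have E0: "E \<ge> 0" using E p by (smt (verit) powr_ge_zero mult_nonneg_nonneg)
  have "E * 1 \<le> E * \<kappa> powr (q-1)"
    using E0 k q by (intro mult_left_mono ge_one_powr_ge_zero) auto
  then have "E * \<bar>b\<bar> powr p \<le> E * \<kappa> powr (q-1) * \<bar>b\<bar> powr p"
    by (intro mult_right_mono) auto
  moreover have "(3 powr p + p * 2 powr (p-1)) * \<bar>b\<bar> powr p \<le> E * \<bar>b\<bar> powr p"
    using E by (intro mult_right_mono) auto
  moreover have "(1 + 1/(2*\<kappa>)) * \<bar>a\<bar> powr p \<ge> 0" using k by simp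
  ultimately show ?thesis using sum_le linear_ge by (simp add: distrib_right)
qed

lemma Taylor_remainder_le_p_le_2:
  fixes p a b \<xi> :: real
  assumes "p \<le> 2" and "a/2 < \<xi>" and "2 * \<bar>b\<bar> < a"
  shows "\<xi> powr (p-2) * b^2 \<le> \<bar>b\<bar> powr p"
proof -
  have a: "a > 0" using assms(3) by linarith
  have "\<xi> powr (p-2) * b^2 = \<xi> powr (p-2) * \<bar>b\<bar> powr (2-p) * \<bar>b\<bar> powr p"
    using powr_add[of "\<bar>b\<bar>" "2-p" p] by simp
  also have "\<dots> \<le> (a/2) powr (p-2) * (a/2) powr (2-p) * \<bar>b\<bar> powr p"
    using assms by (intro mult_right_mono mult_mono powr_mono2' powr_mono2) auto
  also have "\<dots> = \<bar>b\<bar> powr p"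
    using a powr_add[of "a/2" "p-2" "2-p"] by simp
  finally show ?thesis .
qed

lemma Taylor_remainder_le_p_gt_2:
  fixes p a b \<xi> \<kappa> G :: real
  assumes p: "2 < p" and a: "a > 0" and \<xi>: "0 < \<xi>" "\<xi> < 3*a/2" and k: "\<kappa> \<ge> 1"
    and G: "G = p*(p-1)/2 * 2 powr (p-2)"
  shows "p*(p-1)/2 * \<xi> powr (p-2) * b^2
           \<le> a powr p / (2*\<kappa>) + G * (2*G) powr (p/2-1) * \<kappa> powr (p/2-1) * \<bar>b\<bar> powr p"
proof -
  have G0: "G \<ge> 0" unfolding G using p by simp
  have "p*(p-1)/2 * \<xi> powr (p-2) * b^2 \<le> p*(p-1)/2 * (2*a) powr (p-2) * b^2"
    using \<xi> p a by (intro mult_right_mono mult_left_mono powr_mono2) auto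
  also have "\<dots> = G * (a powr (p-2) * b^2)" unfolding G using a by (simp add: powr_mult)
  finally have R: "p*(p-1)/2 * \<xi> powr (p-2) * b^2 \<le> G * (a powr (p-2) * b^2)" .
  have a_p: "a powr p = a powr (p-2) * a^2"
    using a powr_add[of a "p-2" 2] by simp
  have rest_nonneg: "G * (2*G) powr (p/2-1) * \<kappa> powr (p/2-1) * \<bar>b\<bar> powr p \<ge> 0"
    using G0 by simp
  show ?thesis
  proof (cases "G * b^2 * (2*\<kappa>) \<le> a^2")
    case True
    have "G * (a powr (p-2) * b^2) = a powr (p-2) * (G * b^2 * (2*\<kappa>)) / (2*\<kappa>)"
      using k by simp
    also have "\<dots> \<le> a powr (p-2) * a^2 / (2*\<kappa>)"
      using True k by (intro divide_right_mono mult_left_mono) auto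
    finally show ?thesis using R a_p rest_nonneg by simp
  next
    case False
    have "2 * ((p-2)/2) = p-2" by simp
    then have "a powr (p-2) = (a powr 2) powr ((p-2)/2)" by (simp only: powr_powr)
    also have "\<dots> = (a^2) powr ((p-2)/2)" using a by simp
    also have "\<dots> \<le> (G * b^2 * (2*\<kappa>)) powr ((p-2)/2)"
      using False p by (intro powr_mono2) auto
    also have "\<dots> = (2*G) powr (p/2-1) * \<kappa> powr (p/2-1) * \<bar>b\<bar> powr (p-2)"
    proof -
      have "G * b^2 * (2*\<kappa>) = (2*G) * \<kappa> * \<bar>b\<bar> powr 2" by simp
      then have "(G * b^2 * (2*\<kappa>)) powr ((p-2)/2)
          = (2*G) powr ((p-2)/2) * \<kappa> powr ((p-2)/2) * (\<bar>b\<bar> powr 2) powr ((p-2)/2)"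
        using G0 k by (simp only: powr_mult abs_ge_zero powr_ge_zero mult_nonneg_nonneg)
      also have "(\<bar>b\<bar> powr 2) powr ((p-2)/2) = \<bar>b\<bar> powr (p-2)"
        using \<open>2 * ((p-2)/2) = p-2\<close> by (simp only: powr_powr)
      finally have "(G * b^2 * (2*\<kappa>)) powr ((p-2)/2)
          = (2*G) powr ((p-2)/2) * \<kappa> powr ((p-2)/2) * \<bar>b\<bar> powr (p-2)" .
      moreover have "(p-2)/2 = p/2-1" by simp
      ultimately show ?thesis by metis
    qed
    finally have "G * (a powr (p-2) * b^2)
        \<le> G * ((2*G) powr (p/2-1) * \<kappa> powr (p/2-1) * \<bar>b\<bar> powr (p-2) * b^2)"
      using G0 by (intro mult_left_mono mult_right_mono) auto
    also have "\<dots> = G * (2*G) powr (p/2-1) * \<kappa> powr (p/2-1) * \<bar>b\<bar> powr p"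
      using powr_add[of "\<bar>b\<bar>" "p-2" 2] by simp
    finally show ?thesis using R k a by (smt (verit) divide_nonneg_pos powr_ge_zero)
  qed
qed

lemma powr_smoothness_small_increment:
  fixes p a b E \<kappa> G :: real
  assumes p: "1 < p" and a: "a > 0" and ab: "2 * \<bar>b\<bar> < a" and k: "\<kappa> \<ge> 1"
    and G: "G = p*(p-1)/2 * 2 powr (p-2)"
    and E: "E \<ge> p*(p-1)/2 + G * (2*G) powr (p/2-1)"
  shows "\<bar>a+b\<bar> powr p \<le> (1 + 1/(2*\<kappa>)) * a powr p + p * a powr (p-1) * b
                           + E * \<kappa> powr (p / min p 2 - 1) * \<bar>b\<bar> powr p"
proof -
  obtain \<xi> where \<xi>: "a/2 < \<xi>" "\<xi> < 3*a/2"
    and Taylor: "(a+b) powr p = a powr p + p * a powr (p-1) * b + p*(p-1)/2 * \<xi> powr (p-2) * b^2"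
    using powr_Taylor_second_order[OF a ab] by blast
  have c_nonneg: "p*(p-1)/2 \<ge> 0" "G * (2*G) powr (p/2-1) \<ge> 0"
    using p unfolding G by auto
  have a_p: "a powr p / (2*\<kappa>) \<ge> 0" using a k by simp
  have "p*(p-1)/2 * \<xi> powr (p-2) * b^2 \<le> a powr p / (2*\<kappa>) + E * \<kappa> powr (p / min p 2 - 1) * \<bar>b\<bar> powr p"
  proof (cases "p \<le> 2")
    case True
    then have "p*(p-1)/2 * (\<xi> powr (p-2) * b^2) \<le> p*(p-1)/2 * \<bar>b\<bar> powr p"
      using c_nonneg \<xi> ab Taylor_remainder_le_p_le_2 by (intro mult_left_mono) auto
    also have "\<dots> \<le> E * \<bar>b\<bar> powr p" using E c_nonneg by (intro mult_right_mono) auto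
    moreover have "\<kappa> powr (p / min p 2 - 1) = 1" using True k p by simp
    ultimately show ?thesis using a_p by (simp add: mult.assoc)
  next
    case False
    then have "p / min p 2 - 1 = p/2 - 1" by simp
    moreover have "G * (2*G) powr (p/2-1) * \<kappa> powr (p/2-1) * \<bar>b\<bar> powr p
        \<le> E * \<kappa> powr (p/2-1) * \<bar>b\<bar> powr p"
      using E c_nonneg by (intro mult_right_mono) auto
    ultimately show ?thesis
      using Taylor_remainder_le_p_gt_2[OF _ a _ \<xi>(2) k G, of b] False \<xi> a by auto
  qed
  moreover have "\<bar>a+b\<bar> = a+b" using a ab by auto
  ultimately show ?thesis using Taylor by (simp add: algebra_simps)
qed

lemma ex_powr_smoothness:
  fixes p :: real
  assumes p: "1 < p"
  shows "\<exists>E>0. powr_smoothness p E"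
proof -
  define G where "G = p*(p-1)/2 * 2 powr (p-2)"
  define E where "E = 3 powr p + p * 2 powr (p-1) + (p*(p-1)/2 + G * (2*G) powr (p/2-1))"
  have nonneg: "p * 2 powr (p-1) \<ge> 0" "p*(p-1)/2 \<ge> 0" "G * (2*G) powr (p/2-1) \<ge> 0"
    using p unfolding G_def by auto
  have E_large: "E \<ge> 3 powr p + p * 2 powr (p-1)"
    and E_small: "E \<ge> p*(p-1)/2 + G * (2*G) powr (p/2-1)"
    unfolding E_def using nonneg by (smt (verit) powr_gt_zero)+
  have "E > 0" using E_large p by (smt (verit) powr_gt_zero nonneg(1))
  moreover have "powr_smoothness p E"
    unfolding powr_smoothness_def
  proof (intro allI impI)
    fix \<kappa> a b :: real assume k: "\<kappa> \<ge> 1"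
    consider "\<bar>a\<bar> \<le> 2 * \<bar>b\<bar>" | "2 * \<bar>b\<bar> < a" | "2 * \<bar>b\<bar> < -a" by linarith
    then show "\<bar>a+b\<bar> powr p \<le> (1 + 1/(2*\<kappa>)) * \<bar>a\<bar> powr p + p * sgn a * \<bar>a\<bar> powr (p-1) * b
                 + E * \<kappa> powr (p / min p 2 - 1) * \<bar>b\<bar> powr p"
    proof cases
      case 1
      have "p / min p 2 \<ge> 1" using p by (auto simp: min_def)
      with 1 show ?thesis using powr_smoothness_large_increment[OF p _ k _ E_large] by blast
    next
      case 2
      then show ?thesis
        using powr_smoothness_small_increment[OF p _ _ k G_def E_small, of a b] by simp
    next
      case 3
      then have "\<bar>-a + -b\<bar> powr p \<le> (1 + 1/(2*\<kappa>)) * (-a) powr p + p * (-a) powr (p-1) * (-b)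
                   + E * \<kappa> powr (p / min p 2 - 1) * \<bar>-b\<bar> powr p"
        by (intro powr_smoothness_small_increment[OF p _ _ k G_def E_small]) auto
      moreover have "\<bar>-a + -b\<bar> = \<bar>a+b\<bar>" "\<bar>a\<bar> = -a" "sgn a = -1" using 3 by auto
      ultimately show ?thesis by simp
    qed
  qed
  ultimately show ?thesis by blast
qed

section \<open>\<open>L\<^sup>p\<close> norms\<close>

lemma abs_convex_combination_powr_le:
  fixes p t x y :: real
  assumes p: "1 \<le> p" and t: "0 \<le> t" "t \<le> 1"
  shows "\<bar>t*x + (1-t)*y\<bar> powr p \<le> t * \<bar>x\<bar> powr p + (1-t) * \<bar>y\<bar> powr p"
proof -
  have powr_le_self: "s powr p \<le> s" if "0 \<le> s" "s \<le> 1" for s :: real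
    using powr_mono'[of 1 p s] that p by simp
  have "\<bar>t*x + (1-t)*y\<bar> \<le> t*\<bar>x\<bar> + (1-t)*\<bar>y\<bar>"
    using t abs_triangle_ineq[of "t*x" "(1-t)*y"] by (simp add: abs_mult)
  then have "\<bar>t*x + (1-t)*y\<bar> powr p \<le> (t*\<bar>x\<bar> + (1-t)*\<bar>y\<bar>) powr p"
    using p by (intro powr_mono2) auto
  also have "\<dots> \<le> t * \<bar>x\<bar> powr p + (1-t) * \<bar>y\<bar> powr p"
  proof (cases "x = 0 \<or> y = 0")
    case True
    then show ?thesis
      using t p powr_le_self[of t] powr_le_self[of "1-t"]
      by (auto simp: powr_mult intro!: mult_right_mono)
  next
    case False
    then show ?thesis
      using convex_onD[OF powr_convex[OF p], of "1-t" "\<bar>x\<bar>" "\<bar>y\<bar>"] t by (simp add: algebra_simps)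
  qed
  finally show ?thesis .
qed

definition Lp_integral :: "'a measure \<Rightarrow> real \<Rightarrow> ('a \<Rightarrow> real) \<Rightarrow> real" where
  "Lp_integral M p f = (\<integral>x. \<bar>f x\<bar> powr p \<partial>M)"

lemma Lpnorm_nonneg: "Lpnorm M p f \<ge> 0"
  by (simp add: Lpnorm_def)

lemma Lpnorm_diff_commute: "Lpnorm M p (\<lambda>x. f x - g x) = Lpnorm M p (\<lambda>x. g x - f x)"
  by (simp add: Lpnorm_def abs_minus_commute)

lemma Lp_borel_measurable: "f \<in> Lp M p \<Longrightarrow> f \<in> borel_measurable M"
  and Lp_integrable: "f \<in> Lp M p \<Longrightarrow> integrable M (\<lambda>x. \<bar>f x\<bar> powr p)"
  by (auto simp: Lp_def)

locale Lp_exponent =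
  fixes M :: "'a measure" and p :: real
  assumes one_le_p: "1 \<le> p"
begin

lemma Lpnorm_eq: "Lpnorm M p f = Lp_integral M p f powr (1/p)"
  by (simp add: Lpnorm_def Lp_integral_def)

lemma Lpnorm_le_iff:
  assumes c: "c \<ge> 0"
  shows "Lpnorm M p f \<le> c \<longleftrightarrow> Lp_integral M p f \<le> c powr p"
proof
  have I: "Lp_integral M p f \<ge> 0" by (simp add: Lp_integral_def)
  show "Lp_integral M p f \<le> c powr p" if "Lpnorm M p f \<le> c"
  proof -
    have "Lp_integral M p f = Lpnorm M p f powr p"
      using I one_le_p by (simp add: Lpnorm_eq powr_powr)
    also have "\<dots> \<le> c powr p" using that one_le_p by (intro powr_mono2) (auto simp: Lpnorm_nonneg)
    finally show ?thesis .
  qed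
  show "Lpnorm M p f \<le> c" if "Lp_integral M p f \<le> c powr p"
  proof -
    have "Lpnorm M p f \<le> (c powr p) powr (1/p)"
      using that one_le_p I by (simp add: Lpnorm_eq powr_mono2)
    also have "\<dots> = c" using one_le_p c by (simp add: powr_powr)
    finally show ?thesis .
  qed
qed

lemma Lp_zero: "(\<lambda>x. 0) \<in> Lp M p"
  using one_le_p by (simp add: Lp_def)

lemma Lp_cmult:
  assumes "f \<in> Lp M p"
  shows "(\<lambda>x. c * f x) \<in> Lp M p"
proof -
  have "integrable M (\<lambda>x. \<bar>c\<bar> powr p * \<bar>f x\<bar> powr p)"
    using Lp_integrable[OF assms] by simp
  then show ?thesis
    using Lp_borel_measurable[OF assms] by (simp add: Lp_def abs_mult powr_mult)
qed

lemma Lpnorm_cmult: "Lpnorm M p (\<lambda>x. c * f x) = \<bar>c\<bar> * Lpnorm M p f"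
  using one_le_p by (simp add: Lpnorm_def abs_mult powr_mult powr_powr)

lemma Lp_add:
  assumes f: "f \<in> Lp M p" and g: "g \<in> Lp M p"
  shows "(\<lambda>x. f x + g x) \<in> Lp M p"
proof -
  have meas: "(\<lambda>x. f x + g x) \<in> borel_measurable M"
    using Lp_borel_measurable[OF f] Lp_borel_measurable[OF g] by measurable
  have bound: "\<bar>f x + g x\<bar> powr p \<le> 2 powr p * (\<bar>f x\<bar> powr p + \<bar>g x\<bar> powr p)" for x
  proof -
    have "\<bar>f x + g x\<bar> powr p \<le> (2 * max \<bar>f x\<bar> \<bar>g x\<bar>) powr p"
      using one_le_p by (intro powr_mono2) auto
    also have "\<dots> = 2 powr p * max \<bar>f x\<bar> \<bar>g x\<bar> powr p" by (simp add: powr_mult)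
    also have "max \<bar>f x\<bar> \<bar>g x\<bar> powr p \<le> \<bar>f x\<bar> powr p + \<bar>g x\<bar> powr p"
      by (auto simp: max_def)
    finally show ?thesis by simp
  qed
  have "integrable M (\<lambda>x. \<bar>f x + g x\<bar> powr p)"
    by (rule Bochner_Integration.integrable_bound[where f="\<lambda>x. 2 powr p * (\<bar>f x\<bar> powr p + \<bar>g x\<bar> powr p)"])
       (use Lp_integrable[OF f] Lp_integrable[OF g] meas bound in auto)
  with meas show ?thesis by (simp add: Lp_def)
qed

lemma Lp_diff: "f \<in> Lp M p \<Longrightarrow> g \<in> Lp M p \<Longrightarrow> (\<lambda>x. f x - g x) \<in> Lp M p"
  using Lp_add[of f "\<lambda>x. (-1) * g x"] Lp_cmult[of g "-1"] by simp

lemma Lp_sum: "(\<And>i. i \<in> I \<Longrightarrow> f i \<in> Lp M p) \<Longrightarrow> (\<lambda>x. \<Sum>i\<in>I. f i x) \<in> Lp M p"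
  by (induction I rule: infinite_finite_induct) (auto simp: Lp_zero intro: Lp_add)

text \<open>For \<open>\<alpha> > \<parallel>f\<parallel>\<close> and \<open>\<beta> > \<parallel>g\<parallel>\<close>, \<open>(f+g)/(\<alpha>+\<beta>)\<close> is a pointwise
  convex combination of \<open>f/\<alpha>\<close> and \<open>g/\<beta>\<close>, whose \<open>p\<close>-th power integrals are at most 1.\<close>
lemma Lpnorm_add_le:
  assumes f: "f \<in> Lp M p" and g: "g \<in> Lp M p"
  shows "Lpnorm M p (\<lambda>x. f x + g x) \<le> Lpnorm M p f + Lpnorm M p g"
proof (rule field_le_epsilon)
  fix e :: real assume e: "e > 0"
  define \<alpha> where "\<alpha> = Lpnorm M p f + e/2"
  define \<beta> where "\<beta> = Lpnorm M p g + e/2"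
  have ab: "\<alpha> > 0" "\<beta> > 0"
    using e Lpnorm_nonneg[of M p f] Lpnorm_nonneg[of M p g] unfolding \<alpha>_def \<beta>_def by linarith+
  define t where "t = \<alpha> / (\<alpha> + \<beta>)"
  have t: "0 \<le> t" "t \<le> 1" "1 - t = \<beta> / (\<alpha>+\<beta>)" using ab unfolding t_def by (auto simp: field_simps)
  define F where "F = (\<lambda>x. t * (\<bar>f x\<bar> powr p / \<alpha> powr p) + (1-t) * (\<bar>g x\<bar> powr p / \<beta> powr p))"
  have pointwise: "\<bar>f x + g x\<bar> powr p \<le> (\<alpha>+\<beta>) powr p * F x" for x
  proof -
    have "t * (f x / \<alpha>) = f x / (\<alpha>+\<beta>)" using ab unfolding t_def by simp
    moreover have "(1-t) * (g x / \<beta>) = g x / (\<alpha>+\<beta>)" using ab unfolding t(3) by simp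
    ultimately have "f x + g x = (\<alpha>+\<beta>) * (t * (f x / \<alpha>) + (1-t) * (g x / \<beta>))"
      using ab by (simp add: add_divide_distrib[symmetric])
    then have "\<bar>f x + g x\<bar> powr p = (\<alpha>+\<beta>) powr p * \<bar>t * (f x / \<alpha>) + (1-t) * (g x / \<beta>)\<bar> powr p"
      using ab by (simp add: abs_mult powr_mult)
    also have "\<dots> \<le> (\<alpha>+\<beta>) powr p * (t * \<bar>f x / \<alpha>\<bar> powr p + (1-t) * \<bar>g x / \<beta>\<bar> powr p)"
      by (intro mult_left_mono abs_convex_combination_powr_le[OF one_le_p t(1,2)]) simp
    also have "\<dots> = (\<alpha>+\<beta>) powr p * F x"
      using ab by (simp add: F_def powr_divide)
    finally show ?thesis .
  qed
  have "Lp_integral M p (\<lambda>x. f x + g x) \<le> (\<integral>x. (\<alpha>+\<beta>) powr p * F x \<partial>M)"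
    unfolding Lp_integral_def F_def
    using Lp_integrable[OF f] Lp_integrable[OF g] Lp_integrable[OF Lp_add[OF f g]] pointwise
    by (intro integral_mono) (auto simp: F_def)
  also have "\<dots> = (\<alpha>+\<beta>) powr p * (t * (Lp_integral M p f / \<alpha> powr p) + (1-t) * (Lp_integral M p g / \<beta> powr p))"
    using Lp_integrable[OF f] Lp_integrable[OF g] by (simp add: F_def Lp_integral_def)
  also have "\<dots> \<le> (\<alpha>+\<beta>) powr p * (t * 1 + (1-t) * 1)"
  proof -
    have "Lpnorm M p f \<le> \<alpha>" "Lpnorm M p g \<le> \<beta>"
      using e unfolding \<alpha>_def \<beta>_def by simp_all
    then have "Lp_integral M p f \<le> \<alpha> powr p" "Lp_integral M p g \<le> \<beta> powr p"
      using Lpnorm_le_iff[of \<alpha> f] Lpnorm_le_iff[of \<beta> g] ab by simp_all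
    then show ?thesis using ab t by (intro mult_left_mono add_mono) auto
  qed
  finally have "Lpnorm M p (\<lambda>x. f x + g x) \<le> \<alpha> + \<beta>" using Lpnorm_le_iff ab by simp
  then show "Lpnorm M p (\<lambda>x. f x + g x) \<le> Lpnorm M p f + Lpnorm M p g + e"
    unfolding \<alpha>_def \<beta>_def by simp
qed

lemma Lpnorm_diff_le:
  assumes "f \<in> Lp M p" "g \<in> Lp M p"
  shows "Lpnorm M p (\<lambda>x. f x - g x) \<le> Lpnorm M p f + Lpnorm M p g"
  using Lpnorm_add_le[OF assms(1) Lp_cmult[OF assms(2), of "-1"]] Lpnorm_cmult[of "-1" g] by simp

lemma Lpnorm_diff_triangle:
  assumes "f \<in> Lp M p" "g \<in> Lp M p" "h \<in> Lp M p"
  shows "Lpnorm M p (\<lambda>x. f x - h x) \<le> Lpnorm M p (\<lambda>x. f x - g x) + Lpnorm M p (\<lambda>x. g x - h x)"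
  using Lpnorm_add_le[OF Lp_diff[OF assms(1,2)] Lp_diff[OF assms(2,3)]] by simp

lemma Lpnorm_sum_le:
  assumes "\<And>i. i \<in> I \<Longrightarrow> f i \<in> Lp M p"
  shows "Lpnorm M p (\<lambda>x. \<Sum>i\<in>I. f i x) \<le> (\<Sum>i\<in>I. Lpnorm M p (f i))"
  using assms
proof (induction I rule: infinite_finite_induct)
  case (insert a I)
  have "Lpnorm M p (\<lambda>x. \<Sum>i\<in>insert a I. f i x) = Lpnorm M p (\<lambda>x. f a x + (\<Sum>i\<in>I. f i x))"
    using insert by simp
  also have "\<dots> \<le> Lpnorm M p (f a) + Lpnorm M p (\<lambda>x. \<Sum>i\<in>I. f i x)"
    using insert.prems by (intro Lpnorm_add_le Lp_sum) auto
  also have "\<dots> \<le> Lpnorm M p (f a) + (\<Sum>i\<in>I. Lpnorm M p (f i))"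
    using insert by simp
  finally show ?case using insert by simp
qed (use one_le_p in \<open>simp_all add: Lpnorm_def\<close>)

lemma Lpnorm_average_diff_le:
  assumes s: "s > 0"
    and gH: "\<And>t. t < s \<Longrightarrow> g t \<in> Lp M p \<and> H t \<in> Lp M p \<and> Lpnorm M p (\<lambda>x. g t x - H t x) \<le> \<epsilon>"
  shows "Lpnorm M p (\<lambda>x. (\<Sum>t<s. (1/real s) * g t x) - (\<Sum>t<s. (1/real s) * H t x)) \<le> \<epsilon>"
proof -
  have "Lpnorm M p (\<lambda>x. (\<Sum>t<s. (1/real s) * g t x) - (\<Sum>t<s. (1/real s) * H t x))
      = Lpnorm M p (\<lambda>x. \<Sum>t<s. (1/real s) * (g t x - H t x))"
    by (simp add: right_diff_distrib sum_subtractf)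
  also have "\<dots> \<le> (\<Sum>t<s. Lpnorm M p (\<lambda>x. (1/real s) * (g t x - H t x)))"
    using gH by (intro Lpnorm_sum_le Lp_cmult Lp_diff) auto
  also have "\<dots> = (\<Sum>t<s. (1/real s) * Lpnorm M p (\<lambda>x. g t x - H t x))"
    by (simp only: Lpnorm_cmult) simp
  also have "\<dots> \<le> (\<Sum>t<s. (1/real s) * \<epsilon>)"
    using gH by (intro sum_mono mult_left_mono) auto
  also have "\<dots> = \<epsilon>" using s by simp
  finally show ?thesis .
qed

end

section \<open>Expectations of random sums\<close>

text \<open>\<open>sample_expectation c Y n k \<Phi>\<close> is the expectation of \<open>\<Phi> (Y (J 0) + \<dots> + Y (J (k-1)))\<close> for
  independent indices \<open>J t < n\<close> with distribution \<open>c\<close>, computed by averaging over the last index.\<close>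
primrec sample_expectation ::
    "(nat \<Rightarrow> real) \<Rightarrow> (nat \<Rightarrow> 'a \<Rightarrow> real) \<Rightarrow> nat \<Rightarrow> nat \<Rightarrow> (('a \<Rightarrow> real) \<Rightarrow> real) \<Rightarrow> real" where
  "sample_expectation c Y n 0 \<Phi> = \<Phi> (\<lambda>x. 0)"
| "sample_expectation c Y n (Suc k) \<Phi> =
     sample_expectation c Y n k (\<lambda>S. \<Sum>j<n. c j * \<Phi> (\<lambda>x. S x + Y j x))"

definition sample_sums :: "(nat \<Rightarrow> 'a \<Rightarrow> real) \<Rightarrow> nat \<Rightarrow> nat \<Rightarrow> ('a \<Rightarrow> real) set" where
  "sample_sums Y n k = {\<lambda>x. \<Sum>t<k. Y (J t) x | J. \<forall>t<k. J t < n}"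

lemma zero_in_sample_sums: "(\<lambda>x. 0) \<in> sample_sums Y n 0"
  by (auto simp: sample_sums_def)

lemma sample_sums_add:
  assumes "S \<in> sample_sums Y n k" and "j < n"
  shows "(\<lambda>x. S x + Y j x) \<in> sample_sums Y n (Suc k)"
proof -
  obtain J where J: "\<forall>t<k. J t < n" and S: "S = (\<lambda>x. \<Sum>t<k. Y (J t) x)"
    using assms(1) by (auto simp: sample_sums_def)
  have "\<forall>t<Suc k. (J(k := j)) t < n" using J assms(2) by (auto simp: less_Suc_eq)
  moreover have "(\<lambda>x. S x + Y j x) = (\<lambda>x. \<Sum>t<Suc k. Y ((J(k := j)) t) x)"
    unfolding S by (auto intro!: sum.cong)
  ultimately show ?thesis unfolding sample_sums_def by blast
qed

lemma sample_expectation_mono: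
  assumes c: "\<And>j. j < n \<Longrightarrow> c j \<ge> 0"
    and le: "\<And>S. S \<in> sample_sums Y n k \<Longrightarrow> \<Phi> S \<le> \<Psi> S"
  shows "sample_expectation c Y n k \<Phi> \<le> sample_expectation c Y n k \<Psi>"
  using le
proof (induction k arbitrary: \<Phi> \<Psi>)
  case 0
  then show ?case using zero_in_sample_sums by simp blast
next
  case (Suc k)
  show ?case unfolding sample_expectation.simps
  proof (rule Suc.IH)
    fix S assume "S \<in> sample_sums Y n k"
    then show "(\<Sum>j<n. c j * \<Phi> (\<lambda>x. S x + Y j x)) \<le> (\<Sum>j<n. c j * \<Psi> (\<lambda>x. S x + Y j x))"
      using c by (intro sum_mono mult_left_mono Suc.prems sample_sums_add) auto
  qed
qed

lemma sample_expectation_affine: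
  assumes "(\<Sum>j<n. c j) = 1"
  shows "sample_expectation c Y n k (\<lambda>S. \<alpha> * \<Phi> S + \<beta>) = \<alpha> * sample_expectation c Y n k \<Phi> + \<beta>"
proof (induction k arbitrary: \<Phi>)
  case (Suc k)
  have "(\<Sum>j<n. c j * (\<alpha> * \<Phi> (\<lambda>x. S x + Y j x) + \<beta>))
      = \<alpha> * (\<Sum>j<n. c j * \<Phi> (\<lambda>x. S x + Y j x)) + (\<Sum>j<n. c j) * \<beta>" for S
    by (simp add: algebra_simps sum.distrib sum_distrib_left sum_distrib_right)
  then show ?case using Suc.IH assms by simp
qed simp

lemma ex_sample_sum_le_expectation:
  assumes c: "\<And>j. j < n \<Longrightarrow> c j \<ge> 0" and c1: "(\<Sum>j<n. c j) = 1"
  shows "\<exists>S\<in>sample_sums Y n k. \<Phi> S \<le> sample_expectation c Y n k \<Phi>"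
proof (induction k arbitrary: \<Phi>)
  case 0
  then show ?case using zero_in_sample_sums by auto
next
  case (Suc k)
  obtain S where S: "S \<in> sample_sums Y n k"
    and le: "(\<Sum>j<n. c j * \<Phi> (\<lambda>x. S x + Y j x)) \<le> sample_expectation c Y n (Suc k) \<Phi>"
    using Suc.IH[of "\<lambda>S. \<Sum>j<n. c j * \<Phi> (\<lambda>x. S x + Y j x)"] by auto
  define m where "m = (\<Sum>j<n. c j * \<Phi> (\<lambda>x. S x + Y j x))"
  have "\<exists>j<n. \<Phi> (\<lambda>x. S x + Y j x) \<le> m"
  proof (rule ccontr)
    assume "\<not> ?thesis"
    then have gt: "\<And>j. j < n \<Longrightarrow> m < \<Phi> (\<lambda>x. S x + Y j x)" by auto
    obtain j0 where j0: "j0 < n" "c j0 > 0"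
      using c1 sum_nonpos[of "{..<n}" c] by (force simp: not_le)
    have "(\<Sum>j<n. c j * m) < (\<Sum>j<n. c j * \<Phi> (\<lambda>x. S x + Y j x))"
    proof (rule sum_strict_mono_ex1)
      show "\<forall>j\<in>{..<n}. c j * m \<le> c j * \<Phi> (\<lambda>x. S x + Y j x)"
        using c gt by (auto intro: mult_left_mono less_imp_le)
      show "\<exists>j\<in>{..<n}. c j * m < c j * \<Phi> (\<lambda>x. S x + Y j x)"
        using j0 gt by (intro bexI[of _ j0]) auto
    qed simp
    then have "m < m" using c1 unfolding m_def[symmetric] by (simp flip: sum_distrib_right)
    then show False by simp
  qed
  then obtain j where j: "j < n" "\<Phi> (\<lambda>x. S x + Y j x) \<le> m" by blast
  then have "\<Phi> (\<lambda>x. S x + Y j x) \<le> sample_expectation c Y n (Suc k) \<Phi>"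
    using le unfolding m_def by linarith
  then show ?case using sample_sums_add[OF S j(1)] by blast
qed

lemma power_growth_step:
  fixes q :: real and k :: nat
  assumes q: "q \<ge> 1"
  shows "(1 + 1/(2 * max 1 (real k))) * (2 * real k powr q) + max 1 (real k) powr (q-1)
           \<le> 2 * real (Suc k) powr q"
proof (cases "k = 0")
  case True
  then show ?thesis using q by simp
next
  case False
  then have k: "real k \<ge> 1" by simp
  have k_powr: "real k powr q / real k = real k powr (q-1)" using k by (simp add: powr_diff)
  have "(1 + 1/(2 * real k)) * (2 * real k powr q) + real k powr (q-1)
      = 2 * (real k powr q * (1 + 1/real k))"
    using k k_powr by (simp add: field_simps)
  also have "\<dots> \<le> 2 * (real k powr q * (1 + 1/real k) powr q)"
    using q k powr_mono[of 1 q "1 + 1/real k"] by (intro mult_left_mono) auto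
  also have "\<dots> = 2 * (real k * (1 + 1/real k)) powr q"
    using k by (simp add: powr_mult)
  also have "real k * (1 + 1/real k) = real (Suc k)"
    using k by (simp add: field_simps)
  finally show ?thesis using k by simp
qed

section \<open>Simple functions and covering numbers\<close>

definition measurable_partition :: "'a measure \<Rightarrow> nat \<Rightarrow> (nat \<Rightarrow> 'a set) \<Rightarrow> bool" where
  "measurable_partition M l A \<longleftrightarrow> (\<forall>i<l. A i \<in> sets M) \<and>
     (\<forall>i<l. \<forall>j<l. i \<noteq> j \<longrightarrow> A i \<inter> A j = {}) \<and> (\<Union>i<l. A i) = space M"

lemma Gpk_eq:
  "Gpk M p k = {h \<in> Lp M p. \<exists>l A a. l \<le> k \<and> measurable_partition M l A \<and>
                                      h = (\<lambda>x. \<Sum>i<l. a i * indicator (A i) x)}"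
  by (auto simp: Gpk_def measurable_partition_def)

lemma step_function_eq:
  fixes a :: "nat \<Rightarrow> real"
  assumes "measurable_partition M l A" and "i < l" and "x \<in> A i"
  shows "(\<Sum>j<l. a j * indicator (A j) x) = a i"
proof -
  have "(\<Sum>j<l. a j * indicator (A j) x) = (\<Sum>j<l. if j = i then a j else 0)"
    using assms by (intro sum.cong) (auto simp: measurable_partition_def indicator_def)
  then show ?thesis using assms(2) by simp
qed

lemma step_function_outside:
  fixes a :: "nat \<Rightarrow> real"
  assumes "measurable_partition M l A" and "x \<notin> space M"
  shows "(\<Sum>j<l. a j * indicator (A j) x) = 0"
  using assms by (auto simp: measurable_partition_def indicator_def intro!: sum.neutral)

lemma measurable_partition_refine:
  assumes A: "measurable_partition M l1 A" and B: "measurable_partition M l2 B"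
  shows "measurable_partition M (l1 * l2) (\<lambda>m. A (m div l2) \<inter> B (m mod l2))"
proof -
  have idx: "m div l2 < l1" "m mod l2 < l2" if "m < l1 * l2" for m
  proof -
    have "l2 > 0" using that by (cases "l2 = 0") auto
    then show "m div l2 < l1" "m mod l2 < l2" using that by (auto simp: less_mult_imp_div_less)
  qed
  have disj: "A (m div l2) \<inter> B (m mod l2) \<inter> (A (m' div l2) \<inter> B (m' mod l2)) = {}"
    if "m < l1 * l2" "m' < l1 * l2" "m \<noteq> m'" for m m'
  proof (cases "m div l2 = m' div l2")
    case True
    then have "m mod l2 \<noteq> m' mod l2" using that(3) by (metis div_mod_decomp)
    then show ?thesis using B idx[OF that(1)] idx[OF that(2)] unfolding measurable_partition_def by blast
  next
    case False
    then show ?thesis using A idx[OF that(1)] idx[OF that(2)] unfolding measurable_partition_def by blast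
  qed
  have "space M \<subseteq> (\<Union>m<l1 * l2. A (m div l2) \<inter> B (m mod l2))"
  proof
    fix x assume x: "x \<in> space M"
    obtain i where i: "i < l1" "x \<in> A i"
      using A x unfolding measurable_partition_def by blast
    obtain j where j: "j < l2" "x \<in> B j"
      using B x unfolding measurable_partition_def by blast
    note ij = i j
    have "i * l2 + j < Suc i * l2" using j by simp
    also have "\<dots> \<le> l1 * l2" using i by (intro mult_le_mono1) simp
    finally have "i * l2 + j < l1 * l2" .
    moreover have "(i * l2 + j) div l2 = i" "(i * l2 + j) mod l2 = j" using ij by auto
    ultimately show "x \<in> (\<Union>m<l1 * l2. A (m div l2) \<inter> B (m mod l2))" using ij by force
  qed
  moreover have "A i \<subseteq> space M" if "i < l1" for i
    using A that by (auto simp: measurable_partition_def)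
  ultimately show ?thesis
    using A B idx disj by (auto simp: measurable_partition_def)
qed

lemma Gpk_Lp: "h \<in> Gpk M p k \<Longrightarrow> h \<in> Lp M p"
  by (simp add: Gpk_def)

lemma Ncov_le:
  assumes "k \<ge> 1" and "\<forall>f\<in>\<A>. \<exists>h\<in>Gpk M p k. Lpnorm M p (\<lambda>x. f x - h x) \<le> \<epsilon>"
  shows "Ncov M p \<epsilon> \<A> \<le> enat k"
  unfolding Ncov_def by (rule INF_lower) (use assms in auto)

lemma Ncov_finiteE:
  assumes "Ncov M p \<epsilon> \<A> < \<infinity>"
  obtains N where "N \<ge> 1" "Ncov M p \<epsilon> \<A> = enat N"
    "\<forall>f\<in>\<A>. \<exists>h\<in>Gpk M p N. Lpnorm M p (\<lambda>x. f x - h x) \<le> \<epsilon>"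
proof -
  define S where "S = {k::nat. k \<ge> 1 \<and> (\<forall>f\<in>\<A>. \<exists>h\<in>Gpk M p k. Lpnorm M p (\<lambda>x. f x - h x) \<le> \<epsilon>)}"
  have Ncov: "Ncov M p \<epsilon> \<A> = (INF k\<in>S. enat k)" unfolding Ncov_def S_def by simp
  have "S \<noteq> {}"
    using assms unfolding Ncov by (auto simp: top_enat_def)
  then have "(LEAST k. k \<in> S) \<in> S" by (auto intro: LeastI)
  moreover have "(INF k\<in>S. enat k) = enat (LEAST k. k \<in> S)"
    using calculation by (intro antisym INF_lower INF_greatest) (auto intro: Least_le)
  ultimately show ?thesis using that unfolding Ncov S_def by blast
qed

definition closed_co_within :: "'a measure \<Rightarrow> real \<Rightarrow> ('a \<Rightarrow> real) set \<Rightarrow> real \<Rightarrow> ('a \<Rightarrow> real) set" where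
  "closed_co_within M p \<A> K = {f \<in> closed_co M p \<A>. \<forall>g\<in>\<A>. Lpnorm M p (\<lambda>x. f x - g x) \<le> K}"

section \<open>Approximating the closed convex hull\<close>

lemma sample_size_bound:
  fixes T K \<eta> \<epsilon> p :: real
  assumes T: "T > 0" and K: "K \<ge> 0" and \<eta>: "\<eta> > 0" and \<epsilon>: "\<epsilon> > 0" and p: "1 < p"
  shows "T * K * real (nat \<lfloor>(2*T*K / (\<eta>*\<epsilon>)) powr (min p 2 / (min p 2 - 1))\<rfloor> + 1) powr (1 / min p 2 - 1)
           \<le> \<eta>*\<epsilon>/2"
proof (cases "K = 0")
  case True
  then show ?thesis using \<eta> \<epsilon> by simp
next
  case False
  define r where "r = min p 2"
  have r: "r > 1" unfolding r_def using p by simp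
  define x where "x = 2*T*K / (\<eta>*\<epsilon>)"
  have x: "x > 0" unfolding x_def using T K False \<eta> \<epsilon> by simp
  define \<gamma> where "\<gamma> = r / (r - 1)"
  have \<gamma>: "\<gamma> > 0" unfolding \<gamma>_def using r by simp
  define s where "s = real (nat \<lfloor>x powr \<gamma>\<rfloor> + 1)"
  have s: "x powr \<gamma> < s" unfolding s_def by linarith
  have "x = (x powr \<gamma>) powr (1/\<gamma>)" using x \<gamma> by (simp add: powr_powr)
  also have "\<dots> < s powr (1/\<gamma>)" using s x \<gamma> by (intro powr_less_mono2) auto
  finally have x_s: "x < s powr (1/\<gamma>)" .
  have "1/r - 1 = - (1/\<gamma>)" unfolding \<gamma>_def using r by (simp add: field_simps)
  then have "s powr (1/r - 1) = 1 / s powr (1/\<gamma>)" using s x by (simp add: powr_minus_divide)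
  also have "\<dots> \<le> 1 / x" using x_s x by (intro divide_left_mono mult_pos_pos) auto
  finally have "T * K * s powr (1/r - 1) \<le> T * K * (1/x)" using T K by (intro mult_left_mono) auto
  also have "\<dots> = \<eta> * \<epsilon> / 2" unfolding x_def using T False \<eta> \<epsilon> by (simp add: field_simps)
  finally show ?thesis unfolding s_def x_def \<gamma>_def r_def by simp
qed

lemma enat_power: "enat N ^ s = enat (N ^ s)"
  by (metis of_nat_eq_enat of_nat_power)

context Lp_exponent
begin

lemma sample_sums_Lp:
  fixes Y :: "nat \<Rightarrow> 'a \<Rightarrow> real"
  assumes "\<And>j. j < n \<Longrightarrow> Y j \<in> Lp M p" and "S \<in> sample_sums Y n k"
  shows "S \<in> Lp M p"
  using assms by (auto simp: sample_sums_def intro!: Lp_sum)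

text \<open>The first-order term of the smoothness inequality integrates to zero because the increments
  \<open>Y j\<close> have mean zero pointwise.\<close>
lemma Lp_integral_random_step_le:
  assumes E: "powr_smoothness p E" "E \<ge> 0"
    and c: "\<And>j. j < n \<Longrightarrow> c j \<ge> 0" and c1: "(\<Sum>j<n. c j) = 1"
    and Y: "\<And>j. j < n \<Longrightarrow> Y j \<in> Lp M p"
    and Y_mean: "\<And>x. (\<Sum>j<n. c j * Y j x) = 0"
    and Y_bound: "\<And>j. j < n \<Longrightarrow> Lp_integral M p (Y j) \<le> \<Lambda>"
    and S: "S \<in> Lp M p" and k: "\<kappa> \<ge> 1"
  shows "(\<Sum>j<n. c j * Lp_integral M p (\<lambda>x. S x + Y j x))
           \<le> (1 + 1/(2*\<kappa>)) * Lp_integral M p S + E * \<kappa> powr (p / min p 2 - 1) * \<Lambda>"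
proof -
  define a where "a = 1 + 1/(2*\<kappa>)"
  define e where "e = E * \<kappa> powr (p / min p 2 - 1)"
  have e: "e \<ge> 0" unfolding e_def using E by simp
  have int_SY: "integrable M (\<lambda>x. \<bar>S x + Y j x\<bar> powr p)" if "j < n" for j
    using Lp_integrable[OF Lp_add[OF S Y[OF that]]] .
  have int_Y: "integrable M (\<lambda>x. \<Sum>j<n. c j * \<bar>Y j x\<bar> powr p)"
    using Lp_integrable[OF Y] by auto
  have int_S: "integrable M (\<lambda>x. \<bar>S x\<bar> powr p)" using Lp_integrable[OF S] .
  have pointwise: "(\<Sum>j<n. c j * \<bar>S x + Y j x\<bar> powr p)
      \<le> a * \<bar>S x\<bar> powr p + e * (\<Sum>j<n. c j * \<bar>Y j x\<bar> powr p)" for x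
  proof -
    have "(\<Sum>j<n. c j * \<bar>S x + Y j x\<bar> powr p) \<le>
        (\<Sum>j<n. c j * (a * \<bar>S x\<bar> powr p + p * sgn (S x) * \<bar>S x\<bar> powr (p-1) * Y j x
                        + e * \<bar>Y j x\<bar> powr p))"
      using E(1) k c unfolding a_def e_def powr_smoothness_def
      by (intro sum_mono mult_left_mono) (auto simp: mult.assoc)
    also have "\<dots> = (\<Sum>j<n. c j) * (a * \<bar>S x\<bar> powr p)
        + (p * sgn (S x) * \<bar>S x\<bar> powr (p-1)) * (\<Sum>j<n. c j * Y j x)
        + e * (\<Sum>j<n. c j * \<bar>Y j x\<bar> powr p)"
      by (simp add: algebra_simps sum.distrib sum_distrib_left sum_distrib_right)
    finally show ?thesis using c1 Y_mean by simp
  qed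
  have "(\<Sum>j<n. c j * Lp_integral M p (\<lambda>x. S x + Y j x))
      = (\<integral>x. (\<Sum>j<n. c j * \<bar>S x + Y j x\<bar> powr p) \<partial>M)"
    unfolding Lp_integral_def using int_SY by (simp add: integral_sum)
  also have "\<dots> \<le> (\<integral>x. a * \<bar>S x\<bar> powr p + e * (\<Sum>j<n. c j * \<bar>Y j x\<bar> powr p) \<partial>M)"
    using int_SY int_Y int_S pointwise by (intro integral_mono) auto
  also have "\<dots> = a * Lp_integral M p S + e * (\<Sum>j<n. c j * Lp_integral M p (Y j))"
    using int_S Lp_integrable[OF Y] int_Y
    by (simp add: Lp_integral_def Bochner_Integration.integral_sum)
  also have "\<dots> \<le> a * Lp_integral M p S + e * \<Lambda>"
  proof -
    have "(\<Sum>j<n. c j * Lp_integral M p (Y j)) \<le> (\<Sum>j<n. c j * \<Lambda>)"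
      using c Y_bound by (intro sum_mono mult_left_mono) auto
    also have "\<dots> = \<Lambda>" using c1 by (simp flip: sum_distrib_right)
    finally show ?thesis using e by (intro add_left_mono mult_left_mono)
  qed
  finally show ?thesis unfolding a_def e_def by (simp add: mult.assoc)
qed

lemma sample_expectation_Lp_integral_le:
  assumes E: "powr_smoothness p E" "E \<ge> 0"
    and c: "\<And>j. j < n \<Longrightarrow> c j \<ge> 0" and c1: "(\<Sum>j<n. c j) = 1"
    and Y: "\<And>j. j < n \<Longrightarrow> Y j \<in> Lp M p"
    and Y_mean: "\<And>x. (\<Sum>j<n. c j * Y j x) = 0"
    and Y_bound: "\<And>j. j < n \<Longrightarrow> Lp_integral M p (Y j) \<le> \<Lambda>" and \<Lambda>: "\<Lambda> \<ge> 0"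
  shows "sample_expectation c Y n k (Lp_integral M p) \<le> 2*E * real k powr (p / min p 2) * \<Lambda>"
proof (induction k)
  case 0
  then show ?case using one_le_p by (simp add: Lp_integral_def)
next
  case (Suc k)
  define \<kappa> where "\<kappa> = max 1 (real k)"
  define q where "q = p / min p 2"
  have q: "q \<ge> 1" unfolding q_def using one_le_p by (auto simp: min_def)
  have "sample_expectation c Y n (Suc k) (Lp_integral M p)
      \<le> sample_expectation c Y n k (\<lambda>S. (1 + 1/(2*\<kappa>)) * Lp_integral M p S + E * \<kappa> powr (q - 1) * \<Lambda>)"
    unfolding sample_expectation.simps q_def
    using Lp_integral_random_step_le[OF E c c1 Y Y_mean Y_bound sample_sums_Lp[OF Y]]
    by (intro sample_expectation_mono c) (auto simp: \<kappa>_def)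
  also have "\<dots> = (1 + 1/(2*\<kappa>)) * sample_expectation c Y n k (Lp_integral M p) + E * \<kappa> powr (q - 1) * \<Lambda>"
    by (rule sample_expectation_affine[OF c1])
  also have "\<dots> \<le> (1 + 1/(2*\<kappa>)) * (2*E * real k powr q * \<Lambda>) + E * \<kappa> powr (q - 1) * \<Lambda>"
    using Suc.IH unfolding q_def \<kappa>_def by (intro add_right_mono mult_left_mono) auto
  also have "\<dots> = (E * \<Lambda>) * ((1 + 1/(2*\<kappa>)) * (2 * real k powr q) + \<kappa> powr (q-1))"
    by (simp add: algebra_simps)
  also have "\<dots> \<le> (E * \<Lambda>) * (2 * real (Suc k) powr q)"
    using power_growth_step[OF q, of k] E(2) \<Lambda> unfolding \<kappa>_def by (intro mult_left_mono) auto
  finally show ?case unfolding q_def by (simp add: ac_simps)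
qed

text \<open>Maurey's empirical method: draw \<open>k\<close> of the \<open>g j\<close> independently with probabilities \<open>c j\<close>;
  some draw is at least as good as the expected error of the empirical mean.\<close>
lemma ex_empirical_mean_near_convex_combination:
  fixes g :: "nat \<Rightarrow> 'a \<Rightarrow> real" and n k :: nat
  assumes E: "powr_smoothness p E" "E \<ge> 0"
    and c: "\<And>j. j < n \<Longrightarrow> c j \<ge> 0" and c1: "(\<Sum>j<n. c j) = 1"
    and g: "\<And>j. j < n \<Longrightarrow> g j \<in> Lp M p" and L: "L \<ge> 0"
    and g_near: "\<And>i. i < n \<Longrightarrow> Lpnorm M p (\<lambda>x. g i x - (\<Sum>j<n. c j * g j x)) \<le> L"
    and k: "k \<ge> 1"
  shows "\<exists>J. (\<forall>t<k. J t < n) \<and>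
           Lpnorm M p (\<lambda>x. (\<Sum>j<n. c j * g j x) - (\<Sum>t<k. (1/real k) * g (J t) x))
             \<le> (2*E) powr (1/p) * L * real k powr (1/min p 2 - 1)"
proof -
  define f where "f = (\<lambda>x. \<Sum>j<n. c j * g j x)"
  have f: "f \<in> Lp M p" unfolding f_def using g by (intro Lp_sum Lp_cmult) auto
  define Y where "Y = (\<lambda>i x. g i x - f x)"
  have Y: "Y j \<in> Lp M p" if "j < n" for j unfolding Y_def by (rule Lp_diff[OF g[OF that] f])
  have Y_mean: "(\<Sum>j<n. c j * Y j x) = 0" for x
    using c1 by (simp add: Y_def f_def right_diff_distrib sum_subtractf flip: sum_distrib_right)
  have Y_bound: "Lp_integral M p (Y j) \<le> L powr p" if "j < n" for j
    using Lpnorm_le_iff[OF L, of "Y j"] g_near[OF that] unfolding Y_def f_def by simp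
  obtain S where "S \<in> sample_sums Y n k"
    and S_le: "Lp_integral M p S \<le> sample_expectation c Y n k (Lp_integral M p)"
    using ex_sample_sum_le_expectation[OF c c1] by blast
  then obtain J where J: "\<forall>t<k. J t < n" and S: "S = (\<lambda>x. \<Sum>t<k. Y (J t) x)"
    by (auto simp: sample_sums_def)
  have "sample_expectation c Y n k (Lp_integral M p) \<le> 2*E * real k powr (p / min p 2) * L powr p"
    by (rule sample_expectation_Lp_integral_le[OF E c c1 Y Y_mean Y_bound]) auto
  with S_le have "Lpnorm M p S \<le> ((2*E * real k powr (p / min p 2) * L powr p) powr (1/p))"
    using one_le_p by (simp add: Lpnorm_eq Lp_integral_def powr_mono2)
  also have "\<dots> = (2*E) powr (1/p) * real k powr (1/min p 2) * L"
    using E(2) L one_le_p by (simp add: powr_mult powr_powr)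
  finally have S_norm: "Lpnorm M p S \<le> (2*E) powr (1/p) * real k powr (1/min p 2) * L" .
  have k_pos: "real k > 0" using k by simp
  have "(\<lambda>x. f x - (\<Sum>t<k. (1/real k) * g (J t) x)) = (\<lambda>x. (-1/real k) * S x)"
  proof
    fix x
    have "(-1/real k) * S x = (-1/real k) * ((\<Sum>t<k. g (J t) x) - real k * f x)"
      by (simp add: S Y_def sum_subtractf)
    also have "\<dots> = f x - (\<Sum>t<k. (1/real k) * g (J t) x)"
      using k_pos by (simp add: field_simps flip: sum_distrib_left sum_divide_distrib)
    finally show "f x - (\<Sum>t<k. (1/real k) * g (J t) x) = (-1/real k) * S x" by simp
  qed
  then have "Lpnorm M p (\<lambda>x. f x - (\<Sum>t<k. (1/real k) * g (J t) x)) = Lpnorm M p S / real k"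
    using k_pos by (simp only: Lpnorm_cmult) simp
  also have "\<dots> \<le> (2*E) powr (1/p) * real k powr (1/min p 2) * L / real k"
    using S_norm k_pos by (simp add: divide_right_mono)
  also have "\<dots> = (2*E) powr (1/p) * L * real k powr (1/min p 2 - 1)"
    using k_pos by (simp add: powr_diff)
  finally show ?thesis using J unfolding f_def by blast
qed

lemma Gpk_zero: "(\<lambda>x. 0) \<in> Gpk M p 1"
  unfolding Gpk_eq measurable_partition_def
  by (auto simp: Lp_zero intro!: exI[of _ "1::nat"] exI[of _ "\<lambda>_. space M"] exI[of _ "\<lambda>_. 0::real"])

lemma Gpk_lincomb:
  assumes "h1 \<in> Gpk M p k1" and "h2 \<in> Gpk M p k2"
  shows "(\<lambda>x. \<alpha> * h1 x + \<beta> * h2 x) \<in> Gpk M p (k1 * k2)"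
proof -
  obtain l1 A1 a1 where l1: "l1 \<le> k1" and A1: "measurable_partition M l1 A1"
    and h1: "h1 = (\<lambda>x. \<Sum>i<l1. a1 i * indicator (A1 i) x)"
    using assms(1) unfolding Gpk_eq by blast
  obtain l2 A2 a2 where l2: "l2 \<le> k2" and A2: "measurable_partition M l2 A2"
    and h2: "h2 = (\<lambda>x. \<Sum>i<l2. a2 i * indicator (A2 i) x)"
    using assms(2) unfolding Gpk_eq by blast
  define B where "B = (\<lambda>m. A1 (m div l2) \<inter> A2 (m mod l2))"
  define b where "b = (\<lambda>m. \<alpha> * a1 (m div l2) + \<beta> * a2 (m mod l2))"
  have B: "measurable_partition M (l1 * l2) B"
    unfolding B_def by (rule measurable_partition_refine[OF A1 A2])
  have "\<alpha> * h1 x + \<beta> * h2 x = (\<Sum>m<l1 * l2. b m * indicator (B m) x)" for x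
  proof (cases "x \<in> space M")
    case False
    then show ?thesis unfolding h1 h2
      using step_function_outside[OF A1 False, of a1] step_function_outside[OF A2 False, of a2]
        step_function_outside[OF B False, of b]
      by simp
  next
    case True
    then obtain m where m: "m < l1 * l2" "x \<in> B m"
      using B unfolding measurable_partition_def by blast
    moreover have "l2 > 0" using m(1) by (cases "l2 = 0") auto
    ultimately have "m div l2 < l1" "m mod l2 < l2" "x \<in> A1 (m div l2)" "x \<in> A2 (m mod l2)"
      by (auto simp: B_def less_mult_imp_div_less)
    then show ?thesis
      using step_function_eq[OF B m] step_function_eq[OF A1] step_function_eq[OF A2]
      by (simp add: h1 h2 b_def)
  qed
  then have "(\<lambda>x. \<alpha> * h1 x + \<beta> * h2 x) = (\<lambda>x. \<Sum>m<l1 * l2. b m * indicator (B m) x)"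
    by (rule ext)
  moreover have "(\<lambda>x. \<alpha> * h1 x + \<beta> * h2 x) \<in> Lp M p"
    using assms by (intro Lp_add Lp_cmult Gpk_Lp)
  moreover have "l1 * l2 \<le> k1 * k2" using l1 l2 by (rule mult_le_mono)
  ultimately show ?thesis
    unfolding Gpk_eq using B by (auto intro!: exI[of _ "l1 * l2"] exI[of _ B] exI[of _ b])
qed

lemma Gpk_sum:
  assumes "\<And>t. t < s \<Longrightarrow> H t \<in> Gpk M p N"
  shows "(\<lambda>x. \<Sum>t<s. w * H t x) \<in> Gpk M p (N ^ s)"
  using assms
proof (induction s)
  case 0
  then show ?case using Gpk_zero by simp
next
  case (Suc s)
  have "(\<lambda>x. 1 * (\<Sum>t<s. w * H t x) + w * H s x) \<in> Gpk M p (N ^ s * N)"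
    using Suc by (intro Gpk_lincomb) auto
  then show ?case by (simp add: mult.commute)
qed

lemma closed_coE:
  assumes "f \<in> closed_co M p \<A>" and "\<delta> > 0"
  obtains n :: nat and c :: "nat \<Rightarrow> real" and g :: "nat \<Rightarrow> 'a \<Rightarrow> real"
  where "\<forall>i<n. c i \<ge> 0 \<and> g i \<in> \<A>" "(\<Sum>i<n. c i) = 1"
    "Lpnorm M p (\<lambda>x. f x - (\<Sum>i<n. c i * g i x)) \<le> \<delta>"
proof -
  have "\<forall>\<delta>>0. \<exists>g\<in>conv_comb \<A>. Lpnorm M p (\<lambda>x. f x - g x) \<le> \<delta>"
    using assms(1) unfolding closed_co_def by simp
  then obtain f0 where f0: "f0 \<in> conv_comb \<A>" and near: "Lpnorm M p (\<lambda>x. f x - f0 x) \<le> \<delta>"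
    using assms(2) by blast
  from f0 have "\<exists>(n::nat) c g. (\<forall>i<n. c i \<ge> 0 \<and> g i \<in> \<A>) \<and> (\<Sum>i<n. c i) = 1 \<and> f0 = (\<lambda>x. \<Sum>i<n. c i * g i x)"
    unfolding conv_comb_def by simp
  then obtain n :: nat and c g where cg: "\<forall>i<n. c i \<ge> 0 \<and> g i \<in> \<A>" and c1: "(\<Sum>i<n. c i) = 1"
    and f0_eq: "f0 = (\<lambda>x. \<Sum>i<n. c i * g i x)"
    by blast
  have "Lpnorm M p (\<lambda>x. f x - (\<Sum>i<n. c i * g i x)) \<le> \<delta>" using near f0_eq by simp
  with cg c1 show ?thesis by (rule that)
qed

lemma Lpnorm_closed_co_le:
  assumes \<A>: "\<A> \<subseteq> Lp M p" and B: "\<forall>g\<in>\<A>. Lpnorm M p g \<le> B" and f: "f \<in> closed_co M p \<A>"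
  shows "Lpnorm M p f \<le> B"
proof (rule field_le_epsilon)
  fix e :: real assume "e > 0"
  with f obtain n :: nat and c g where cg: "\<forall>i<n. c i \<ge> 0 \<and> g i \<in> \<A>" and c1: "(\<Sum>i<n. c i) = 1"
    and near: "Lpnorm M p (\<lambda>x. f x - (\<Sum>i<n. c i * g i x)) \<le> e"
    by (rule closed_coE)
  have g: "g i \<in> Lp M p" if "i < n" for i using cg that \<A> by blast
  have "Lpnorm M p (\<lambda>x. \<Sum>i<n. c i * g i x) \<le> (\<Sum>i<n. Lpnorm M p (\<lambda>x. c i * g i x))"
    using g by (intro Lpnorm_sum_le Lp_cmult) auto
  also have "\<dots> \<le> (\<Sum>i<n. c i * B)"
    using cg B by (intro sum_mono) (auto simp: Lpnorm_cmult intro: mult_left_mono)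
  also have "\<dots> = B" using c1 by (simp flip: sum_distrib_right)
  finally have "Lpnorm M p (\<lambda>x. \<Sum>i<n. c i * g i x) \<le> B" .
  moreover have "Lpnorm M p f \<le> Lpnorm M p (\<lambda>x. f x - (\<Sum>i<n. c i * g i x)) + Lpnorm M p (\<lambda>x. \<Sum>i<n. c i * g i x)"
  proof -
    have "(\<lambda>x. \<Sum>i<n. c i * g i x) \<in> Lp M p" using g by (intro Lp_sum Lp_cmult) auto
    moreover have "f \<in> Lp M p" using f by (simp add: closed_co_def)
    ultimately show ?thesis
      using Lpnorm_add_le[of "\<lambda>x. f x - (\<Sum>i<n. c i * g i x)" "\<lambda>x. \<Sum>i<n. c i * g i x"]
      by (simp add: Lp_diff)
  qed
  ultimately show "Lpnorm M p f \<le> B + e" using near by linarith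
qed

lemma closed_co_within_eq_closed_co:
  assumes \<A>: "\<A> \<subseteq> Lp M p" and B: "\<forall>g\<in>\<A>. Lpnorm M p g \<le> B"
  shows "closed_co_within M p \<A> (2 * B) = closed_co M p \<A>"
proof -
  have "Lpnorm M p (\<lambda>x. f x - g x) \<le> 2 * B" if f: "f \<in> closed_co M p \<A>" and g: "g \<in> \<A>" for f g
  proof -
    have "Lpnorm M p (\<lambda>x. f x - g x) \<le> Lpnorm M p f + Lpnorm M p g"
      using f g \<A> by (intro Lpnorm_diff_le) (auto simp: closed_co_def)
    then show ?thesis using Lpnorm_closed_co_le[OF \<A> B f] B g by fastforce
  qed
  then show ?thesis unfolding closed_co_within_def by blast
qed

lemma ex_Gpk_near_convex_combination:
  fixes g :: "nat \<Rightarrow> 'a \<Rightarrow> real" and n s N :: nat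
  assumes E: "powr_smoothness p E" "E \<ge> 0"
    and c: "\<And>j. j < n \<Longrightarrow> c j \<ge> 0" and c1: "(\<Sum>j<n. c j) = 1"
    and \<A>: "\<A> \<subseteq> Lp M p" and g: "\<And>j. j < n \<Longrightarrow> g j \<in> \<A>"
    and L: "L \<ge> 0" and g_near: "\<And>i. i < n \<Longrightarrow> Lpnorm M p (\<lambda>x. g i x - (\<Sum>j<n. c j * g j x)) \<le> L"
    and \<A>_approx: "\<forall>g\<in>\<A>. \<exists>h\<in>Gpk M p N. Lpnorm M p (\<lambda>x. g x - h x) \<le> a"
    and s: "s \<ge> 1"
  shows "\<exists>h\<in>Gpk M p (N ^ s). Lpnorm M p (\<lambda>x. (\<Sum>j<n. c j * g j x) - h x)
           \<le> (2*E) powr (1/p) * L * real s powr (1/min p 2 - 1) + a"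
proof -
  have g_Lp: "g j \<in> Lp M p" if "j < n" for j using g that \<A> by blast
  obtain J where J: "\<forall>t<s. J t < n"
    and f0_avg: "Lpnorm M p (\<lambda>x. (\<Sum>j<n. c j * g j x) - (\<Sum>t<s. (1/real s) * g (J t) x))
                   \<le> (2*E) powr (1/p) * L * real s powr (1/min p 2 - 1)"
    using ex_empirical_mean_near_convex_combination[OF E c c1 g_Lp L g_near s] by blast
  have "\<forall>t. \<exists>h. t < s \<longrightarrow> h \<in> Gpk M p N \<and> Lpnorm M p (\<lambda>x. g (J t) x - h x) \<le> a"
    using \<A>_approx J g by blast
  then obtain H :: "nat \<Rightarrow> 'a \<Rightarrow> real" where H: "\<And>t. t < s \<Longrightarrow> H t \<in> Gpk M p N"
    and g_H: "\<And>t. t < s \<Longrightarrow> Lpnorm M p (\<lambda>x. g (J t) x - H t x) \<le> a"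
    by metis
  define f0 where "f0 = (\<lambda>x. \<Sum>j<n. c j * g j x)"
  define avg where "avg = (\<lambda>x. \<Sum>t<s. (1/real s) * g (J t) x)"
  define h where "h = (\<lambda>x. \<Sum>t<s. (1/real s) * H t x)"
  have h: "h \<in> Gpk M p (N ^ s)" unfolding h_def by (rule Gpk_sum[OF H])
  have f0_Lp: "f0 \<in> Lp M p" unfolding f0_def using g_Lp by (intro Lp_sum Lp_cmult) auto
  have avg_Lp: "avg \<in> Lp M p" unfolding avg_def using J g_Lp by (intro Lp_sum Lp_cmult) auto
  have "Lpnorm M p (\<lambda>x. avg x - h x) \<le> a"
    unfolding avg_def h_def using s J g_Lp H g_H
    by (intro Lpnorm_average_diff_le) (auto intro: Gpk_Lp)
  then have "Lpnorm M p (\<lambda>x. f0 x - h x) \<le> (2*E) powr (1/p) * L * real s powr (1/min p 2 - 1) + a"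
    using Lpnorm_diff_triangle[OF f0_Lp avg_Lp Gpk_Lp[OF h]] f0_avg unfolding f0_def avg_def
    by linarith
  then show ?thesis using h unfolding f0_def by blast
qed

lemma closed_co_within_approx:
  fixes N :: nat
  assumes p: "1 < p" and E: "powr_smoothness p E" "E > 0"
    and \<A>: "\<A> \<subseteq> Lp M p"
    and \<A>_approx: "\<forall>g\<in>\<A>. \<exists>h\<in>Gpk M p N. Lpnorm M p (\<lambda>x. g x - h x) \<le> (1 - \<eta>) * \<epsilon>"
    and K: "K \<ge> 0" and \<epsilon>: "\<epsilon> > 0" and \<eta>: "\<eta> > 0"
    and f: "f \<in> closed_co_within M p \<A> K"
  shows "\<exists>h\<in>Gpk M p (N ^ (nat \<lfloor>(2 * (2*E) powr (1/p) * K / (\<eta> * \<epsilon>)) powr (min p 2 / (min p 2 - 1))\<rfloor> + 1)).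
           Lpnorm M p (\<lambda>x. f x - h x) \<le> \<epsilon>"
proof -
  define T where "T = (2*E) powr (1/p)"
  define s where "s = nat \<lfloor>(2 * T * K / (\<eta> * \<epsilon>)) powr (min p 2 / (min p 2 - 1))\<rfloor> + 1"
  define \<sigma> where "\<sigma> = real s powr (1/min p 2 - 1)"
  have T: "T > 0" unfolding T_def using E by simp
  have s: "s \<ge> 1" unfolding s_def by simp
  \<comment> \<open>The error budget \<open>\<epsilon> = \<delta> + (\<eta>\<epsilon>/2 + T\<delta>) + (1 - \<eta>)\<epsilon>\<close> is spent on passing to a finite
    convex combination, on sampling, and on approximating each sample by a simple function.\<close>
  define \<delta> where "\<delta> = \<eta> * \<epsilon> / (2 * (1 + T))"
  have \<delta>: "\<delta> > 0" unfolding \<delta>_def using \<eta> \<epsilon> T by simp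
  have "\<delta> + T * \<delta> = \<delta> * (1 + T)" by (simp add: algebra_simps)
  also have "\<dots> = \<eta> * \<epsilon> / 2"
    unfolding \<delta>_def using T by (simp add: field_simps add_pos_pos)
  finally have \<delta>_T: "\<delta> + T * \<delta> = \<eta> * \<epsilon> / 2" .
  have f_Lp: "f \<in> Lp M p" and f_K: "\<forall>g\<in>\<A>. Lpnorm M p (\<lambda>x. f x - g x) \<le> K"
    using f by (auto simp: closed_co_within_def closed_co_def)
  have "f \<in> closed_co M p \<A>" using f by (simp add: closed_co_within_def)
  then obtain n :: nat and c g where cg: "\<forall>i<n. c i \<ge> 0 \<and> g i \<in> \<A>" and c1: "(\<Sum>i<n. c i) = 1"
    and f_f0: "Lpnorm M p (\<lambda>x. f x - (\<Sum>i<n. c i * g i x)) \<le> \<delta>"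
    using \<delta> by (rule closed_coE)
  define f0 where "f0 = (\<lambda>x. \<Sum>i<n. c i * g i x)"
  have g: "g i \<in> Lp M p" if "i < n" for i using cg that \<A> by blast
  have f0_Lp: "f0 \<in> Lp M p" unfolding f0_def using g cg by (intro Lp_sum Lp_cmult) auto
  have g_f0: "Lpnorm M p (\<lambda>x. g i x - f0 x) \<le> K + \<delta>" if i: "i < n" for i
  proof -
    have "Lpnorm M p (\<lambda>x. g i x - f0 x) \<le> Lpnorm M p (\<lambda>x. g i x - f x) + Lpnorm M p (\<lambda>x. f x - f0 x)"
      by (rule Lpnorm_diff_triangle[OF g[OF i] f_Lp f0_Lp])
    moreover have "Lpnorm M p (\<lambda>x. g i x - f x) \<le> K"
      using f_K cg i Lpnorm_diff_commute[of M p "g i" f] by simp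
    ultimately show ?thesis using f_f0 unfolding f0_def by linarith
  qed
  obtain h where h: "h \<in> Gpk M p (N ^ s)"
    and f0_h: "Lpnorm M p (\<lambda>x. f0 x - h x) \<le> T * (K + \<delta>) * \<sigma> + (1 - \<eta>) * \<epsilon>"
  proof -
    have "c i \<ge> 0" "g i \<in> \<A>" if "i < n" for i using cg that by auto
    moreover have "K + \<delta> \<ge> 0" using K \<delta> by simp
    ultimately show ?thesis
      using that ex_Gpk_near_convex_combination[OF E(1) less_imp_le[OF E(2)] _ c1 \<A> _ _ g_f0[unfolded f0_def]
          \<A>_approx s]
      unfolding f0_def T_def \<sigma>_def by blast
  qed
  have "\<sigma> \<le> real s powr 0"
    unfolding \<sigma>_def using s p by (intro powr_mono) auto
  then have "T * \<delta> * \<sigma> \<le> T * \<delta>" using s T \<delta> by (simp add: mult_left_le)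
  moreover have "T * K * \<sigma> \<le> \<eta> * \<epsilon> / 2"
    unfolding \<sigma>_def s_def by (rule sample_size_bound[OF T K \<eta> \<epsilon> p])
  moreover have "T * (K + \<delta>) * \<sigma> = T * K * \<sigma> + T * \<delta> * \<sigma>" by (simp add: algebra_simps)
  moreover have "Lpnorm M p (\<lambda>x. f x - h x) \<le> Lpnorm M p (\<lambda>x. f x - f0 x) + Lpnorm M p (\<lambda>x. f0 x - h x)"
    by (rule Lpnorm_diff_triangle[OF f_Lp f0_Lp Gpk_Lp[OF h]])
  ultimately have "Lpnorm M p (\<lambda>x. f x - h x) \<le> \<epsilon>"
    using f_f0 f0_h \<delta>_T unfolding f0_def by (simp add: algebra_simps)
  then show ?thesis using h unfolding s_def T_def by blast
qed

lemma Ncov_closed_co_within_le: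
  assumes p: "1 < p" and E: "powr_smoothness p E" "E > 0"
    and \<A>: "\<A> \<subseteq> Lp M p" and \<A>_approx: "unif_approx M p \<A>"
    and K: "K \<ge> 0" and \<epsilon>: "\<epsilon> > 0" and \<eta>: "0 < \<eta>" "\<eta> < 1"
  shows "Ncov M p \<epsilon> (closed_co_within M p \<A> K) \<le> Ncov M p ((1 - \<eta>) * \<epsilon>) \<A> ^
           (nat \<lfloor>(2 * (2*E) powr (1/p) * K / (\<eta> * \<epsilon>)) powr (min p 2 / (min p 2 - 1))\<rfloor> + 1)"
proof -
  have "Ncov M p ((1 - \<eta>) * \<epsilon>) \<A> < \<infinity>"
    using \<A>_approx \<epsilon> \<eta> unfolding unif_approx_def by simp
  then obtain N where N: "N \<ge> 1" "Ncov M p ((1 - \<eta>) * \<epsilon>) \<A> = enat N"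
    and N_approx: "\<forall>g\<in>\<A>. \<exists>h\<in>Gpk M p N. Lpnorm M p (\<lambda>x. g x - h x) \<le> (1 - \<eta>) * \<epsilon>"
    by (rule Ncov_finiteE)
  show ?thesis
    unfolding N(2) enat_power
    using closed_co_within_approx[OF p E \<A> N_approx K \<epsilon> \<eta>(1)] N(1)
    by (intro Ncov_le) auto
qed

lemma unif_approx_closed_co_within:
  assumes p: "1 < p" and E: "powr_smoothness p E" "E > 0"
    and \<A>: "\<A> \<subseteq> Lp M p" and \<A>_approx: "unif_approx M p \<A>" and K: "K \<ge> 0"
  shows "unif_approx M p (closed_co_within M p \<A> K)"
  unfolding unif_approx_def
proof (intro allI impI)
  fix \<epsilon> :: real assume \<epsilon>: "\<epsilon> > 0"
  have "Ncov M p ((1 - 1/2) * \<epsilon>) \<A> < \<infinity>"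
    using \<A>_approx \<epsilon> unfolding unif_approx_def by simp
  then obtain N where N: "Ncov M p ((1 - 1/2) * \<epsilon>) \<A> = enat N"
    by (cases "Ncov M p ((1 - 1/2) * \<epsilon>) \<A>") auto
  obtain s where "Ncov M p \<epsilon> (closed_co_within M p \<A> K) \<le> Ncov M p ((1 - 1/2) * \<epsilon>) \<A> ^ s"
    using Ncov_closed_co_within_le[OF p E \<A> \<A>_approx K \<epsilon>, of "1/2"] by fastforce
  also have "\<dots> = enat (N ^ s)" unfolding N enat_power ..
  also have "\<dots> < \<infinity>" by simp
  finally show "Ncov M p \<epsilon> (closed_co_within M p \<A> K) < \<infinity>" .
qed

end

theorem theorem4p22:
  fixes M :: "'a measure" and p :: real
  assumes nonzero: "emeasure M (space M) \<noteq> 0"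
    and p: "1 < p"
  defines "r \<equiv> min p 2"
  shows "\<exists>C>0. (\<forall>\<A> K. \<A> \<subseteq> Lp M p \<longrightarrow> unif_approx M p \<A> \<longrightarrow> K \<ge> 0 \<longrightarrow>
            (let \<A>K = {f \<in> closed_co M p \<A>. \<forall>g\<in>\<A>. Lpnorm M p (\<lambda>x. f x - g x) \<le> K}
             in unif_approx M p \<A>K \<and>
                (\<forall>\<epsilon>>0. Ncov M p \<epsilon> \<A>K \<le>
                   (INF \<eta> \<in> {0<..<1}. Ncov M p ((1 - \<eta>) * \<epsilon>) \<A> ^
                      (nat \<lfloor>(C * K / (\<eta> * \<epsilon>)) powr (r / (r - 1))\<rfloor> + 1)))))
         \<and> (\<forall>\<A>. \<A> \<subseteq> Lp M p \<longrightarrow> (\<exists>B. \<forall>f\<in>\<A>. Lpnorm M p f \<le> B) \<longrightarrow> unif_approx M p \<A>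
             \<longrightarrow> unif_approx M p (closed_co M p \<A>))"
proof -
  interpret Lp_exponent M p using p by unfold_locales simp
  obtain E where E: "powr_smoothness p E" "E > 0" using ex_powr_smoothness[OF p] by blast
  define C where "C = 2 * (2*E) powr (1/p)"
  have "Ncov M p \<epsilon> (closed_co_within M p \<A> K)
      \<le> (INF \<eta> \<in> {0<..<1}. Ncov M p ((1 - \<eta>) * \<epsilon>) \<A> ^
            (nat \<lfloor>(C * K / (\<eta> * \<epsilon>)) powr (r / (r - 1))\<rfloor> + 1))"
    if "\<A> \<subseteq> Lp M p" "unif_approx M p \<A>" "K \<ge> 0" "\<epsilon> > 0" for \<A> K \<epsilon>
    using Ncov_closed_co_within_le[OF p E that] unfolding C_def r_def by (auto intro!: INF_greatest)
  moreover have "unif_approx M p (closed_co M p \<A>)"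
    if \<A>: "\<A> \<subseteq> Lp M p" and bounded: "\<exists>B. \<forall>f\<in>\<A>. Lpnorm M p f \<le> B"
      and \<A>_approx: "unif_approx M p \<A>" for \<A>
  proof -
    obtain B where "\<forall>f\<in>\<A>. Lpnorm M p f \<le> B" using bounded by blast
    then have "\<forall>f\<in>\<A>. Lpnorm M p f \<le> max B 0" by (auto intro: max.coboundedI1)
    then show ?thesis
      using closed_co_within_eq_closed_co[OF \<A>] unif_approx_closed_co_within[OF p E \<A> \<A>_approx]
      by (metis max.cobounded2 mult_nonneg_nonneg zero_le_numeral)
  qed
  moreover have "C > 0" unfolding C_def using E by simp
  ultimately show ?thesis
    using unif_approx_closed_co_within[OF p E] unfolding closed_co_within_def Let_def by blast
qed

end
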